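(* Let the sequence $\gamma(0),\gamma(1),\dots$ be defined by $\gamma(0)=0$ and recursively $$\gamma(2^l-k)=\frac{2^l+2(-1)^l}{3}-k+2\gamma(k)\qquad (l\ge 0,\ 0\le k\le 2^{l-1}).$$ For a positive integer $n$ let $b(n)$ be the number of maximal blocks of consecutive ones in the binary representation of $n$, and $b(0)=0$. Then: (i) $\gamma(2^l+k)=\frac{2^l+2(-1)^l}{3}-k+4\gamma(k)$ for all integers $l\ge0$ and $0\le k\le 2^{l-1}$; (ii) $\gamma(2^l-k)=\gamma(k)+2\gamma(2^{l-1}-k)$ for all integers $l\ge 0$ and integers $k$ with $2^{l-2}\le k\le 2^{l-1}$; (iii) $\gamma(2^l+k)=1+\gamma(2^l+k-1)+2\gamma(2^l-k)-2\gamma(2^l+1-k)$ for all integers $l\ge0$ and $1\le k\le 2^l$; (iv) for all $n\in\mathbf{N}$, $\gamma(2n)=n-\gamma(n)$ and $\gamma(2n+1)=\gamma(2n)+(2^{1+2b(n)}+1)/3=n-\gamma(n)+(2^{1+2b(n)}+1)/3$; and for all $n\ge1$, $\gamma(2n-1)=\gamma(2n)+(4^{b(2n-1)}-1)/3=n-\gamma(n)+(4^{b(2n-1)}-1)/3$.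
   Context: For example $667=(1010011011)_2$ has $b(667)=4$. Equivalently $b$ satisfies $b(0)=0$, $b(2n)=b(n)$, $b(2n+1)=b(n)+1-(n\bmod 2)$. *)

theory Defs
  imports Complex_Main
begin

text \<open>Number of maximal blocks of consecutive ones in the binary representation of n:
  each maximal block is identified by its most significant position i, i.e. bit i of n is 1
  and bit i+1 of n is 0.  For n = 0 this gives 0.\<close>
definition blocks :: "nat \<Rightarrow> nat" where
  "blocks n = card {i. bit n i \<and> \<not> bit n (Suc i)}"

end

theory Submission
  imports Defs
begin

text \<open>Write \<open>d m = g (m + 1) - g m\<close>.  Reflecting about \<open>2 ^ (l + 1)\<close>, the recurrence gives
  \<open>d (2 ^ (l + 1) - 1 - k) = 1 - 2 d k\<close> for \<open>k < 2 ^ l\<close>, and every \<open>m \<ge> 1\<close> has this form with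
  \<open>k < m\<close>.  The closed form \<open>increment\<close> obeys the same rule: complementing \<open>k\<close> within \<open>l + 1\<close>
  bits turns its runs of zeros into runs of ones, and there is one more of these than \<open>blocks k\<close>
  exactly when \<open>k\<close> is even.  So \<open>d = increment\<close> by strong induction.  Independently, reflecting
  \<open>n\<close> and \<open>2 n\<close> about \<open>2 ^ l\<close> and \<open>2 ^ (l + 1)\<close>, where \<open>n \<le> 2 ^ l < 2 n\<close>, gives
  \<open>g (2 n) = n - g n\<close> by strong induction.  Formula (i) follows by summing increments, since a
  new leading bit multiplies \<open>4 ^ blocks\<close> by \<open>4\<close>; (ii) and (iii) are direct consequences of
  the recurrence.\<close>

lemma bit_nat_imp_less: "bit (m::nat) i \<Longrightarrow> i < m"
proof (rule ccontr)
  assume "bit m i" "\<not> i < m"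
  then have "m < 2 ^ i" using less_exp[of i] by linarith
  with \<open>bit m i\<close> show False by (simp add: bit_iff_odd)
qed

lemma blocks_rec: "blocks m = blocks (m div 2) + of_bool (odd m \<and> even (m div 2))"
proof -
  let ?S = "\<lambda>m::nat. {i. bit m i \<and> \<not> bit m (Suc i)}"
  have finite: "finite (?S m)" for m
    by (rule finite_subset[of _ "{..<m}"]) (auto dest: bit_nat_imp_less)
  have split: "?S m = Suc ` ?S (m div 2) \<union> (if odd m \<and> even (m div 2) then {0} else {})"
  proof (rule set_eqI)
    fix i
    show "i \<in> ?S m \<longleftrightarrow> i \<in> Suc ` ?S (m div 2) \<union> (if odd m \<and> even (m div 2) then {0} else {})"
      by (cases i) (auto simp: bit_Suc bit_0)
  qed
  have "card (?S m) = card (Suc ` ?S (m div 2)) + card (if odd m \<and> even (m div 2) then {0::nat} else {})"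
    unfolding split by (rule card_Un_disjoint) (auto simp: finite)
  then show ?thesis unfolding blocks_def by (simp add: card_image)
qed

lemma blocks_0: "blocks 0 = 0"
  by (simp add: blocks_def)

lemma blocks_double: "blocks (2 * n) = blocks n"
  using blocks_rec[of "2 * n"] by simp

lemma blocks_Suc_double: "blocks (Suc (2 * n)) = blocks n + of_bool (even n)"
  using blocks_rec[of "Suc (2 * n)"] by simp

lemma blocks_complement:
  "k < 2 ^ m \<Longrightarrow> blocks (2 ^ Suc m - 1 - k) = blocks k + of_bool (even k)"
proof (induction m arbitrary: k)
  case 0
  then show ?case using blocks_Suc_double[of 0] by (simp add: blocks_0)
next
  case (Suc m)
  define j where "j = k div 2"
  define c where "c = 2 ^ Suc m - 1 - j"
  have "j < 2 ^ m" using Suc.prems by (simp add: j_def)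
  then have IH: "blocks c = blocks j + of_bool (even j)" and "odd c \<longleftrightarrow> even j"
    using Suc.IH by (auto simp: c_def even_diff_nat)
  show ?case
  proof (cases "even k")
    case True
    then have "k = 2 * j" "2 ^ Suc (Suc m) - 1 - k = Suc (2 * c)"
      using \<open>j < 2 ^ m\<close> by (auto simp: j_def c_def)
    then show ?thesis using IH \<open>odd c \<longleftrightarrow> even j\<close> by (auto simp: blocks_Suc_double blocks_double)
  next
    case False
    then have k: "k = Suc (2 * j)" by (simp add: j_def)
    then have "2 ^ Suc (Suc m) - 1 - k = 2 * c"
      using \<open>j < 2 ^ m\<close> by (simp add: c_def)
    with k show ?thesis using IH by (simp add: blocks_Suc_double blocks_double)
  qed
qed

lemma blocks_add_power: "2 * j < 2 ^ m \<Longrightarrow> blocks (2 ^ m + j) = Suc (blocks j)"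
proof (induction m arbitrary: j)
  case 0
  then show ?case using blocks_Suc_double[of 0] by (simp add: blocks_0)
next
  case (Suc m)
  define i where "i = j div 2"
  have IH: "blocks (2 ^ m + i) = Suc (blocks i)"
    using Suc.prems by (intro Suc.IH) (simp add: i_def)
  show ?case
  proof (cases "even j")
    case True
    then have "2 ^ Suc m + j = 2 * (2 ^ m + i)" "j = 2 * i" by (simp_all add: i_def)
    then show ?thesis using IH by (simp only: blocks_double)
  next
    case False
    then have "m \<noteq> 0" using Suc.prems by (cases m) auto
    moreover have eqs: "2 ^ Suc m + j = Suc (2 * (2 ^ m + i))" "j = Suc (2 * i)"
      using False by (simp_all add: i_def)
    ultimately show ?thesis by (simp only: eqs blocks_Suc_double) (simp add: IH)
  qed
qed

definition reflection_offset :: "nat \<Rightarrow> real" where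
  "reflection_offset l = (2 ^ l + 2 * (-1) ^ l) / 3"

lemma reflection_offset_Suc_add: "reflection_offset (Suc l) + reflection_offset l = 2 ^ l"
  by (simp add: reflection_offset_def field_simps)

definition increment :: "nat \<Rightarrow> real" where
  "increment m = (if even m then 1 + 2 * 4 ^ blocks m else 1 - 4 ^ blocks m) / 3"

lemma increment_complement:
  assumes "k < 2 ^ m"
  shows "increment (2 ^ Suc m - 1 - k) = 1 - 2 * increment k"
proof -
  have "even (2 ^ Suc m - 1 - k) \<longleftrightarrow> odd k"
    using assms by (simp add: even_diff_nat)
  then show ?thesis
    using blocks_complement[OF assms] by (cases "even k") (simp_all add: increment_def field_simps)
qed

lemma increment_add_power:
  assumes "k < 2 ^ l"
  shows "increment (2 ^ Suc l + k) = 4 * increment k - 1"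
proof -
  have "blocks (2 ^ Suc l + k) = Suc (blocks k)"
    using assms by (intro blocks_add_power) simp
  then show ?thesis by (simp add: increment_def field_simps)
qed

locale reflection_recurrence =
  fixes g :: "nat \<Rightarrow> real"
  assumes g_0: "g 0 = 0"
    and g_reflect: "2 * k \<le> 2 ^ l \<Longrightarrow> g (2 ^ l - k) = reflection_offset l - real k + 2 * g k"
begin

lemma g_reflect_diff:
  assumes "2 * Suc k \<le> 2 ^ l"
  shows "g (2 ^ l - k) - g (2 ^ l - Suc k) = 1 - 2 * (g (Suc k) - g k)"
  using g_reflect[of k l] g_reflect[OF assms] assms by simp

lemma g_increment: "g (Suc m) - g m = increment m"
proof (induction m rule: less_induct)
  case (less m)
  show ?case
  proof (cases "m = 0")
    case True
    have "g 1 = 1" using g_reflect[of 0 0] by (simp add: g_0 reflection_offset_def)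
    then show ?thesis using True by (simp add: g_0 increment_def blocks_0)
  next
    case False
    then obtain l where l: "2 ^ l \<le> m" "m < 2 ^ Suc l" using ex_power_ivl1[of 2 m] by auto
    define k where "k = 2 ^ Suc l - 1 - m"
    have "k < 2 ^ l" "k < m" "m = 2 ^ Suc l - 1 - k" "Suc m = 2 ^ Suc l - k"
      using l by (auto simp: k_def)
    then have "g (Suc m) - g m = 1 - 2 * (g (Suc k) - g k)"
      using g_reflect_diff[of k "Suc l"] by simp
    also have "\<dots> = 1 - 2 * increment k" using less.IH[OF \<open>k < m\<close>] by simp
    also have "\<dots> = increment m"
      using increment_complement[OF \<open>k < 2 ^ l\<close>] \<open>m = 2 ^ Suc l - 1 - k\<close> by simp
    finally show ?thesis .
  qed
qed

lemma g_double: "g (2 * n) = real n - g n"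
proof (induction n rule: less_induct)
  case (less n)
  show ?case
  proof (cases "n = 0")
    case True
    then show ?thesis by (simp add: g_0)
  next
    case False
    then obtain l where l: "2 ^ l < 2 * n" "2 * n \<le> 2 ^ Suc l" using ex_power_ivl2[of 2 "2 * n"] by auto
    define j where "j = 2 ^ l - n"
    have j: "j < n" "2 * j \<le> 2 ^ l" "n = 2 ^ l - j" "2 * n = 2 ^ Suc l - 2 * j"
      using l by (auto simp: j_def)
    then have "g (2 * n) + g n
        = (reflection_offset (Suc l) - real (2 * j) + 2 * g (2 * j)) + (reflection_offset l - real j + 2 * g j)"
      using g_reflect[of "2 * j" "Suc l"] g_reflect[of j l] by simp
    also have "\<dots> = 2 ^ l - real j"
      using less.IH[OF \<open>j < n\<close>] reflection_offset_Suc_add[of l] by simp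
    also have "\<dots> = real n" using j(2,3) by (simp add: of_nat_diff)
    finally show ?thesis by simp
  qed
qed

lemma g_add_power: "2 * k \<le> 2 ^ l \<Longrightarrow> g (2 ^ l + k) = reflection_offset l - real k + 4 * g k"
proof (induction k)
  case 0
  then show ?case using g_reflect[of 0 l] by (simp add: g_0)
next
  case (Suc k)
  then obtain l' where l': "l = Suc l'" "k < 2 ^ l'" by (cases l) auto
  have "g (2 ^ l + Suc k) = g (2 ^ l + k) + increment (2 ^ l + k)"
    using g_increment[of "2 ^ l + k"] by simp
  also have "\<dots> = reflection_offset l - real k + 4 * (g k + increment k) - 1"
    using Suc increment_add_power[OF l'(2)] l'(1) by simp
  also have "\<dots> = reflection_offset l - real (Suc k) + 4 * g (Suc k)"
    using g_increment[of k] by simp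
  finally show ?case .
qed

lemma g_reflect_half:
  assumes "2 ^ l \<le> 4 * k" "2 * k \<le> 2 ^ l"
  shows "g (2 ^ l - k) = g k + 2 * g (2 ^ (l - 1) - k)"
proof -
  obtain m where l: "l = Suc m" using assms by (cases l) auto
  define j where "j = 2 ^ m - k"
  have j: "2 * j \<le> 2 ^ m" "k = 2 ^ m - j" "2 ^ (l - 1) - k = j"
    using assms by (auto simp: j_def l)
  then have "g k = reflection_offset m - real j + 2 * g j" "real k = 2 ^ m - real j"
    using g_reflect[of j m] by (simp_all add: of_nat_diff)
  then show ?thesis
    using g_reflect[OF assms(2)] reflection_offset_Suc_add[of m] j(3) by (simp add: l)
qed

lemma g_add_power_diff:
  assumes "1 \<le> k" "k \<le> 2 ^ l"
  shows "g (2 ^ l + k) = 1 + g (2 ^ l + k - 1) + 2 * g (2 ^ l - k) - 2 * g (2 ^ l + 1 - k)"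
proof -
  define i where "i = 2 ^ l - k"
  have "2 * Suc i \<le> 2 ^ Suc l" "2 ^ Suc l - i = 2 ^ l + k" "2 ^ Suc l - Suc i = 2 ^ l + k - 1"
    "Suc i = 2 ^ l + 1 - k"
    using assms by (auto simp: i_def)
  then show ?thesis using g_reflect_diff[of i "Suc l"] by (simp add: i_def)
qed

end

theorem theorem1p5:
  fixes g :: "nat \<Rightarrow> real"
  assumes g0: "g 0 = 0"
    and grec: "\<And>l k. 2 * k \<le> 2 ^ l \<Longrightarrow>
      g (2 ^ l - k) = (2 ^ l + 2 * (-1) ^ l) / 3 - real k + 2 * g k"
  shows "(\<forall>l k. 2 * k \<le> 2 ^ l \<longrightarrow>
            g (2 ^ l + k) = (2 ^ l + 2 * (-1) ^ l) / 3 - real k + 4 * g k)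
       \<and> (\<forall>l k. 2 ^ l \<le> 4 * k \<and> 2 * k \<le> 2 ^ l \<longrightarrow>
            g (2 ^ l - k) = g k + 2 * g (2 ^ (l - 1) - k))
       \<and> (\<forall>l k. 1 \<le> k \<and> k \<le> 2 ^ l \<longrightarrow>
            g (2 ^ l + k) = 1 + g (2 ^ l + k - 1) + 2 * g (2 ^ l - k) - 2 * g (2 ^ l + 1 - k))
       \<and> (\<forall>n. g (2 * n) = real n - g n
            \<and> g (2 * n + 1) = g (2 * n) + (2 ^ (1 + 2 * blocks n) + 1) / 3
            \<and> g (2 * n + 1) = real n - g n + (2 ^ (1 + 2 * blocks n) + 1) / 3)
       \<and> (\<forall>n\<ge>1. g (2 * n - 1) = g (2 * n) + (4 ^ blocks (2 * n - 1) - 1) / 3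
            \<and> g (2 * n - 1) = real n - g n + (4 ^ blocks (2 * n - 1) - 1) / 3)"
proof -
  interpret reflection_recurrence g
    using g0 grec by unfold_locales (simp_all add: reflection_offset_def)
  have "(2::real) ^ (1 + 2 * b) = 2 * 4 ^ b" for b :: nat
    by (simp add: power_add power_mult)
  then have odd_step: "g (2 * n + 1) = g (2 * n) + (2 ^ (1 + 2 * blocks n) + 1) / 3" for n
    using g_increment[of "2 * n"] by (simp add: increment_def blocks_double) (simp add: field_simps)
  have pred_step: "g (2 * n - 1) = g (2 * n) + (4 ^ blocks (2 * n - 1) - 1) / 3" if "n \<ge> 1" for n
    using g_increment[of "2 * n - 1"] that by (simp add: increment_def) (simp add: field_simps)
  show ?thesis
    using g_add_power g_reflect_half g_add_power_diff g_double odd_step pred_step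
    by (simp add: reflection_offset_def)
qed

end
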